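(* Let $a_0,a_1,a_2,a_3,a_4>0$ and $b_0,b_1,b_2,b_3>0$ be real numbers with $$a_1(a_2a_3-a_1a_4)=a_0a_3^2,$$ and consider the real-rational function $$Z(s)=\frac{s\,(b_3s^3+b_2s^2+b_1s+b_0)}{a_4s^4+a_3s^3+a_2s^2+a_1s+a_0}.$$ Under these hypotheses the denominator has exactly one pair of purely imaginary roots $s=\pm jp$ (with $p>0$, $p^2=a_1/a_3$), and these roots are simple. Then the residues of $Z$ at $s=\pm jp$ are real and positive if and only if both of the following hold: (a) $(a_3b_1-a_1b_3)(a_2a_3-2a_1a_4)=(a_3b_0-a_1b_2)\,a_3^2$; (b) $a_1b_3-a_3b_1<0$.
   Context: $j$ denotes the imaginary unit. The residue of $Z$ at a point $s_0$ is the coefficient of $(s-s_0)^{-1}$ in the Laurent expansion of $Z$ about $s_0$. *)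

theory Defs
  imports "HOL-Complex_Analysis.Complex_Analysis"
begin

end

theory Submission
  imports Defs
begin

(* The relation between the a_i is the vanishing of the third Hurwitz determinant of D; it says
   exactly that D s = (s^2 + p^2) * Q s with p^2 = a1 / a3 and Q s = a4 s^2 + a3 s + c, where
   c = a0 / p^2 > 0. Q has no zeros on the imaginary axis, so the imaginary zeros of D are the
   simple zeros j t, t = p or t = -p, and the residue of Z there is
     N (j t) / (2 j t Q (j t)) = (A + j t B) / (2 (C + j t a3)),
   with A = b0 - b2 p^2, B = b1 - b3 p^2, C = c - a4 p^2. This is real iff B C = A a3, and then
   it equals B / (2 a3). Substituting a1 = a3 p^2, the two conditions become (a) and (b). *)

lemma residue_div_linear_factor:
  fixes N H :: "complex \<Rightarrow> complex"
  assumes "open S" "z \<in> S" "N holomorphic_on S" "H holomorphic_on S" "H z \<noteq> 0"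
  shows "residue (\<lambda>s. N s / ((s - z) * H s)) z = N z / H z"
proof -
  define S' where "S' = S \<inter> H -` (- {0})"
  have "open S'"
    unfolding S'_def using assms(1,4)
    by (intro continuous_open_preimage holomorphic_on_imp_continuous_on) auto
  moreover have "(\<lambda>s. N s / H s) holomorphic_on S'"
    using assms(3,4) by (auto simp: S'_def intro!: holomorphic_intros)
  ultimately have "residue (\<lambda>s. N s / H s / (s - z)) z = N z / H z"
    using assms(2,5) by (intro residue_simple) (auto simp: S'_def)
  then show ?thesis
    by (simp add: mult.commute)
qed

lemma deriv_linear_factor:
  fixes H :: "complex \<Rightarrow> complex"
  assumes "H field_differentiable at z"
  shows "deriv (\<lambda>s. (s - z) * H s) z = H z"
proof -
  have "((\<lambda>s. (s - z) * H s) has_field_derivative 1 * H z + (z - z) * deriv H z) (at z)"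
    using assms by (auto intro!: derivative_eq_intros field_differentiable_derivI)
  then show ?thesis
    by (simp add: DERIV_imp_deriv)
qed

lemma sum_square_factor:
  fixes t :: real
  shows "s\<^sup>2 + of_real (t\<^sup>2) = (s - \<i> * t) * (s + \<i> * t)"
  by (simp add: algebra_simps power2_eq_square)

lemma residue_at_imaginary_zero:
  fixes N Q :: "complex \<Rightarrow> complex" and t :: real
  assumes "t \<noteq> 0" "N holomorphic_on UNIV" "Q holomorphic_on UNIV" "Q (\<i> * t) \<noteq> 0"
  shows "residue (\<lambda>s. N s / ((s\<^sup>2 + of_real (t\<^sup>2)) * Q s)) (\<i> * t)
    = N (\<i> * t) / (2 * \<i> * t * Q (\<i> * t))"
proof -
  have "residue (\<lambda>s. N s / ((s - \<i> * t) * ((s + \<i> * t) * Q s))) (\<i> * t)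
      = N (\<i> * t) / ((\<i> * t + \<i> * t) * Q (\<i> * t))"
    using assms by (intro residue_div_linear_factor) (auto intro!: holomorphic_intros)
  moreover have "(\<lambda>s. N s / ((s\<^sup>2 + of_real (t\<^sup>2)) * Q s))
      = (\<lambda>s. N s / ((s - \<i> * t) * ((s + \<i> * t) * Q s)))"
    by (simp only: sum_square_factor mult.assoc)
  ultimately show ?thesis
    by (simp add: mult.assoc)
qed

lemma deriv_at_imaginary_zero:
  fixes Q :: "complex \<Rightarrow> complex" and t :: real
  assumes "Q holomorphic_on UNIV"
  shows "deriv (\<lambda>s. (s\<^sup>2 + of_real (t\<^sup>2)) * Q s) (\<i> * t) = 2 * \<i> * t * Q (\<i> * t)"
proof -
  have "deriv (\<lambda>s. (s - \<i> * t) * ((s + \<i> * t) * Q s)) (\<i> * t) = (\<i> * t + \<i> * t) * Q (\<i> * t)"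
    using assms
    by (intro deriv_linear_factor holomorphic_on_imp_differentiable_at) (auto intro!: holomorphic_intros)
  moreover have "(\<lambda>s. (s\<^sup>2 + of_real (t\<^sup>2)) * Q s) = (\<lambda>s. (s - \<i> * t) * ((s + \<i> * t) * Q s))"
    by (simp only: sum_square_factor mult.assoc)
  ultimately show ?thesis
    by (simp add: mult.assoc)
qed

lemma quadratic_at_imaginary_point:
  fixes a b c t :: real
  shows "of_real a * (\<i> * t)\<^sup>2 + of_real b * (\<i> * t) + of_real c = Complex (c - a * t\<^sup>2) (b * t)"
  by (simp add: complex_eq_iff power2_eq_square)

lemma quadratic_nonzero_on_imaginary_axis:
  fixes a b c :: real and s :: complex
  assumes "b \<noteq> 0" "c \<noteq> 0" "Re s = 0"
  shows "of_real a * s\<^sup>2 + of_real b * s + of_real c \<noteq> 0"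
proof -
  have "s = \<i> * Im s"
    using assms(3) by (simp add: complex_eq_iff)
  then have "of_real a * s\<^sup>2 + of_real b * s + of_real c = Complex (c - a * (Im s)\<^sup>2) (b * Im s)"
    by (metis quadratic_at_imaginary_point)
  then show ?thesis
    using assms(1,2) by (auto simp: Complex_eq_0)
qed

lemma quartic_factor_of_Hurwitz_relation:
  fixes a0 a1 a2 a3 a4 :: real and s :: complex
  assumes "a3 \<noteq> 0" "a1 * (a2 * a3 - a1 * a4) = a0 * a3\<^sup>2"
  shows "of_real a4 * s^4 + of_real a3 * s^3 + of_real a2 * s\<^sup>2 + of_real a1 * s + of_real a0
    = (s\<^sup>2 + of_real (a1 / a3)) * (of_real a4 * s\<^sup>2 + of_real a3 * s + of_real (a2 - a4 * (a1 / a3)))"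
proof -
  define q c where "q = a1 / a3" and "c = a2 - a4 * q"
  have coeffs: "a0 = c * q" "a1 = a3 * q" "a2 = c + a4 * q"
    using assms by (simp_all add: q_def c_def field_simps power2_eq_square)
  have "(s\<^sup>2 + of_real q) * (of_real a4 * s\<^sup>2 + of_real a3 * s + of_real c)
    = of_real a4 * s^4 + of_real a3 * s^3 + of_real (c + a4 * q) * s\<^sup>2 + of_real (a3 * q) * s
      + of_real (c * q)"
    by (simp add: algebra_simps power2_eq_square power3_eq_cube power4_eq_xxxx)
  then show ?thesis
    unfolding q_def[symmetric] c_def[symmetric] by (simp only: coeffs)
qed

lemma Complex_divide_Complex_pos_real_iff:
  fixes A B C E t :: real
  assumes "t \<noteq> 0" "E > 0"
  shows "(Complex A (t * B) / Complex C (t * E) \<in> \<real> \<and> Re (Complex A (t * B) / Complex C (t * E)) > 0)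
    \<longleftrightarrow> B * C = A * E \<and> B > 0"
proof -
  define d where "d = C\<^sup>2 + (t * E)\<^sup>2"
  have "d > 0"
    using assms by (simp add: d_def add_nonneg_pos)
  have Re_quot: "Re (Complex A (t * B) / Complex C (t * E)) = (A * C + t\<^sup>2 * B * E) / d"
    by (simp add: Re_divide d_def power2_eq_square algebra_simps)
  have Im_quot: "Im (Complex A (t * B) / Complex C (t * E)) = t * (B * C - A * E) / d"
    by (simp add: Im_divide d_def power2_eq_square algebra_simps)
  show ?thesis
  proof (cases "B * C = A * E")
    case True
    define X where "X = (C\<^sup>2 + t\<^sup>2 * E\<^sup>2) / (E * d)"
    have "X > 0"
      using assms \<open>d > 0\<close> unfolding X_def by (intro divide_pos_pos add_nonneg_pos) auto
    have "A = B * C / E"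
      using True assms(2) by (simp add: field_simps)
    then have "Re (Complex A (t * B) / Complex C (t * E)) = B * X"
      using assms(2) \<open>d > 0\<close> unfolding Re_quot X_def by (simp add: field_simps power2_eq_square)
    then show ?thesis
      using True \<open>X > 0\<close> by (simp add: complex_is_Real_iff Im_quot zero_less_mult_iff)
  next
    case False
    then show ?thesis
      using assms(1) \<open>d > 0\<close> by (simp add: complex_is_Real_iff Im_quot)
  qed
qed

lemma imaginary_axis_zeros_of_product:
  fixes a3 a4 c t :: real
  assumes "a3 \<noteq> 0" "c \<noteq> 0"
  shows "{s. Re s = 0 \<and> (s\<^sup>2 + of_real (t\<^sup>2)) * (of_real a4 * s\<^sup>2 + of_real a3 * s + of_real c) = 0}
    = {\<i> * t, - \<i> * t}"
proof -
  have "(s\<^sup>2 + of_real (t\<^sup>2)) * (of_real a4 * s\<^sup>2 + of_real a3 * s + of_real c) = 0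
      \<longleftrightarrow> s = \<i> * t \<or> s = - \<i> * t" if "Re s = 0" for s
    using quadratic_nonzero_on_imaginary_axis[OF assms that, of a4]
    unfolding mult_eq_0_iff sum_square_factor by (auto simp: add_eq_0_iff2)
  then show ?thesis
    by (auto simp: power_mult_distrib)
qed

lemma deriv_nonzero_at_imaginary_zero:
  fixes a3 a4 c t :: real
  assumes "a3 \<noteq> 0" "t \<noteq> 0"
  shows "deriv (\<lambda>s. (s\<^sup>2 + of_real (t\<^sup>2)) * (of_real a4 * s\<^sup>2 + of_real a3 * s + of_real c)) (\<i> * t) \<noteq> 0"
  using assms
  by (subst deriv_at_imaginary_zero) (auto intro!: holomorphic_intros simp: quadratic_at_imaginary_point Complex_eq_0)

lemma residue_at_imaginary_zero_pos_real_iff: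
  fixes a3 a4 c b0 b1 b2 b3 t :: real
  assumes "a3 > 0" "t \<noteq> 0"
  defines "R \<equiv> residue (\<lambda>s. s * (of_real b3 * s^3 + of_real b2 * s\<^sup>2 + of_real b1 * s + of_real b0)
      / ((s\<^sup>2 + of_real (t\<^sup>2)) * (of_real a4 * s\<^sup>2 + of_real a3 * s + of_real c))) (\<i> * t)"
  shows "R \<in> \<real> \<and> Re R > 0
    \<longleftrightarrow> (b1 - b3 * t\<^sup>2) * (c - a4 * t\<^sup>2) = (b0 - b2 * t\<^sup>2) * a3 \<and> b1 - b3 * t\<^sup>2 > 0"
proof -
  define A B C where "A = b0 - b2 * t\<^sup>2" and "B = b1 - b3 * t\<^sup>2" and "C = c - a4 * t\<^sup>2"
  have "(\<i> * t) * (of_real b3 * (\<i> * t)^3 + of_real b2 * (\<i> * t)\<^sup>2 + of_real b1 * (\<i> * t) + of_real b0)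
      = \<i> * t * Complex A (t * B)"
    by (simp add: A_def B_def complex_eq_iff algebra_simps power2_eq_square power3_eq_cube)
  moreover have "2 * \<i> * t * (of_real a4 * (\<i> * t)\<^sup>2 + of_real a3 * (\<i> * t) + of_real c)
      = \<i> * t * Complex (2 * C) (t * (2 * a3))"
    by (simp add: C_def quadratic_at_imaginary_point complex_eq_iff)
  ultimately have "R = Complex A (t * B) / Complex (2 * C) (t * (2 * a3))"
    unfolding R_def using assms(1,2)
    by (subst residue_at_imaginary_zero) (auto intro!: holomorphic_intros simp: quadratic_at_imaginary_point Complex_eq_0)
  then have "R \<in> \<real> \<and> Re R > 0 \<longleftrightarrow> B * C = A * a3 \<and> B > 0"
    using Complex_divide_Complex_pos_real_iff[OF assms(2), of "2 * a3" A B "2 * C"] assms(1) by simp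
  then show ?thesis
    by (simp only: A_def B_def C_def)
qed

lemma residue_positivity_conditions_iff:
  fixes a1 a2 a3 a4 b0 b1 b2 b3 c q :: real
  assumes "a3 > 0" "a1 = a3 * q" "a2 = c + a4 * q"
  shows "((a3 * b1 - a1 * b3) * (a2 * a3 - 2 * a1 * a4) = (a3 * b0 - a1 * b2) * a3\<^sup>2
      \<and> a1 * b3 - a3 * b1 < 0)
    \<longleftrightarrow> (b1 - b3 * q) * (c - a4 * q) = (b0 - b2 * q) * a3 \<and> b1 - b3 * q > 0"
proof -
  have "(a3 * b1 - a1 * b3) * (a2 * a3 - 2 * a1 * a4) - (a3 * b0 - a1 * b2) * a3\<^sup>2
      = a3\<^sup>2 * ((b1 - b3 * q) * (c - a4 * q) - (b0 - b2 * q) * a3)"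
    unfolding assms(2,3) by (simp add: algebra_simps power2_eq_square)
  then have "(a3 * b1 - a1 * b3) * (a2 * a3 - 2 * a1 * a4) = (a3 * b0 - a1 * b2) * a3\<^sup>2
      \<longleftrightarrow> (b1 - b3 * q) * (c - a4 * q) = (b0 - b2 * q) * a3"
    using assms(1) by (subst (1 2) eq_iff_diff_eq_0) simp
  moreover have "a1 * b3 - a3 * b1 = - (a3 * (b1 - b3 * q))"
    unfolding assms(2) by (simp add: algebra_simps)
  ultimately show ?thesis
    using assms(1) by (simp add: zero_less_mult_iff)
qed

theorem lemma4:
  fixes a0 a1 a2 a3 a4 b0 b1 b2 b3 :: real
    and D N Z :: "complex \<Rightarrow> complex"
    and p :: real
  assumes pos_a: "a0 > 0" "a1 > 0" "a2 > 0" "a3 > 0" "a4 > 0"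
    and pos_b: "b0 > 0" "b1 > 0" "b2 > 0" "b3 > 0"
    and rel: "a1 * (a2 * a3 - a1 * a4) = a0 * a3^2"
    and D_def: "D = (\<lambda>s. of_real a4 * s^4 + of_real a3 * s^3 + of_real a2 * s^2 + of_real a1 * s + of_real a0)"
    and N_def: "N = (\<lambda>s. s * (of_real b3 * s^3 + of_real b2 * s^2 + of_real b1 * s + of_real b0))"
    and Z_def: "Z = (\<lambda>s. N s / D s)"
    and p_def: "p = sqrt (a1 / a3)"
  shows "p > 0 \<and> p^2 = a1 / a3
    \<and> {s. Re s = 0 \<and> D s = 0} = {\<i> * of_real p, - \<i> * of_real p}
    \<and> deriv D (\<i> * of_real p) \<noteq> 0 \<and> deriv D (- \<i> * of_real p) \<noteq> 0
    \<and> ((residue Z (\<i> * of_real p) \<in> \<real> \<and> Re (residue Z (\<i> * of_real p)) > 0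
         \<and> residue Z (- \<i> * of_real p) \<in> \<real> \<and> Re (residue Z (- \<i> * of_real p)) > 0)
       \<longleftrightarrow> ((a3 * b1 - a1 * b3) * (a2 * a3 - 2 * a1 * a4) = (a3 * b0 - a1 * b2) * a3^2
            \<and> a1 * b3 - a3 * b1 < 0))"
proof -
  define c where "c = a2 - a4 * p\<^sup>2"
  have p: "p > 0" "p\<^sup>2 = a1 / a3"
    using pos_a(2,4) by (simp_all add: p_def)
  have "c * p\<^sup>2 = a0"
    using rel pos_a(4) unfolding c_def p(2) by (simp add: field_simps power2_eq_square)
  then have "c > 0"
    using p(1) pos_a(1) by (metis zero_less_mult_pos2 zero_less_power)
  have "D = (\<lambda>s. (s\<^sup>2 + of_real (p\<^sup>2)) * (of_real a4 * s\<^sup>2 + of_real a3 * s + of_real c))"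
    using quartic_factor_of_Hurwitz_relation[OF _ rel] pos_a(4) unfolding c_def p(2) by (simp add: D_def)
  then have D_eq: "D = (\<lambda>s. (s\<^sup>2 + of_real (t\<^sup>2)) * (of_real a4 * s\<^sup>2 + of_real a3 * s + of_real c))"
    if "t = p \<or> t = - p" for t :: real
    using that by auto
  have roots: "{s. Re s = 0 \<and> D s = 0} = {\<i> * of_real p, - \<i> * of_real p}"
    using imaginary_axis_zeros_of_product[of a3 c p a4] \<open>c > 0\<close> pos_a(4) by (simp add: D_eq[of p])
  have deriv_nonzero: "deriv D (\<i> * t) \<noteq> 0" if "t = p \<or> t = - p" for t :: real
    using deriv_nonzero_at_imaginary_zero[of a3 t a4 c] that p(1) pos_a(4) unfolding D_eq[OF that] by auto
  have residue_iff: "residue Z (\<i> * t) \<in> \<real> \<and> Re (residue Z (\<i> * t)) > 0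
      \<longleftrightarrow> (b1 - b3 * p\<^sup>2) * (c - a4 * p\<^sup>2) = (b0 - b2 * p\<^sup>2) * a3 \<and> b1 - b3 * p\<^sup>2 > 0"
    if "t = p \<or> t = - p" for t :: real
  proof -
    have "t \<noteq> 0" "t\<^sup>2 = p\<^sup>2"
      using that p(1) by auto
    then show ?thesis
      using residue_at_imaginary_zero_pos_real_iff[of a3 t b3 b2 b1 b0 a4 c] pos_a(4)
      unfolding Z_def N_def D_eq[OF that] by simp
  qed
  have a1_eq: "a1 = a3 * p\<^sup>2"
    using pos_a(4) by (simp add: p(2))
  have a2_eq: "a2 = c + a4 * p\<^sup>2"
    by (simp add: c_def)
  have "- \<i> * of_real p = \<i> * of_real (- p)"
    by simp
  then show ?thesis
    using p roots deriv_nonzero[of p] deriv_nonzero[of "- p"] residue_iff[of p] residue_iff[of "- p"]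
      residue_positivity_conditions_iff[OF pos_a(4) a1_eq a2_eq]
    by auto
qed

end
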